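(* For every integer $n\ge 5$, the independence polynomial $I(T_{4,n};t)$ is unimodal and its mode belongs to $\{\lambda_{n+2},\lambda_{n+2}+1\}$, where $\lambda_{k}$ denotes the mode of the independence polynomial $I(P_k;t)$ of the path $P_k$ on $k$ vertices.
   Context: For a simple graph $G$, the independence polynomial is $I(G;t)=\sum_{k\ge 0}s_k(G)t^k$, where $s_k(G)$ is the number of independent sets (sets of pairwise non-adjacent vertices) of size $k$ in $G$. $P_k$ is the path on $k$ vertices; its independence polynomial is known to be unimodal. For integers $m\ge 3$, $n\ge 1$, the tadpole graph $T_{m,n}$ is the simple graph with vertex set $\{x_1,\dots,x_m,y_1,\dots,y_n\}$ and edges $\{x_i,x_{i+1}\}$ for $1\le i\le m-1$, $\{x_m,x_1\}$, $\{y_j,y_{j+1}\}$ for $1\le j\le n-1$, and $\{x_m,y_1\}$. A polynomial $\sum a_kt^k$ with nonnegative coefficients is unimodal if $a_0\le\cdots\le a_m\ge a_{m+1}\ge\cdots$ for some $m$; with $a_{-1}=0$, its mode is the unique $i$ with $a_{i-1}<a_i\ge a_{i+1}\ge a_{i+2}\ge\cdots$. *)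

theory Defs
  imports Main
begin

definition independent_set :: "'a set \<Rightarrow> ('a \<Rightarrow> 'a \<Rightarrow> bool) \<Rightarrow> 'a set \<Rightarrow> bool" where
  "independent_set V E S \<longleftrightarrow> S \<subseteq> V \<and> (\<forall>u\<in>S. \<forall>v\<in>S. \<not> E u v)"

definition indep_coeff :: "'a set \<Rightarrow> ('a \<Rightarrow> 'a \<Rightarrow> bool) \<Rightarrow> nat \<Rightarrow> nat" where
  "indep_coeff V E k = card {S. independent_set V E S \<and> card S = k}"

definition path_V :: "nat \<Rightarrow> nat set" where
  "path_V k = {..<k}"

definition path_E :: "nat \<Rightarrow> nat \<Rightarrow> nat \<Rightarrow> bool" where
  "path_E k u v \<longleftrightarrow> u < k \<and> v < k \<and> (u + 1 = v \<or> v + 1 = u)"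

text \<open>Tadpole T_{m,n}: x_i = Inl i (1 \<le> i \<le> m), y_j = Inr j (1 \<le> j \<le> n).\<close>
definition tadpole_V :: "nat \<Rightarrow> nat \<Rightarrow> (nat + nat) set" where
  "tadpole_V m n = Inl ` {1..m} \<union> Inr ` {1..n}"

definition tadpole_arc :: "nat \<Rightarrow> nat \<Rightarrow> (nat + nat) \<Rightarrow> (nat + nat) \<Rightarrow> bool" where
  "tadpole_arc m n a b \<longleftrightarrow>
     (\<exists>i. 1 \<le> i \<and> i \<le> m - 1 \<and> a = Inl i \<and> b = Inl (i + 1)) \<or>
     (a = Inl m \<and> b = Inl 1) \<or>
     (\<exists>j. 1 \<le> j \<and> j \<le> n - 1 \<and> a = Inr j \<and> b = Inr (j + 1)) \<or>
     (a = Inl m \<and> b = Inr 1)"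

definition tadpole_E :: "nat \<Rightarrow> nat \<Rightarrow> (nat + nat) \<Rightarrow> (nat + nat) \<Rightarrow> bool" where
  "tadpole_E m n a b \<longleftrightarrow> tadpole_arc m n a b \<or> tadpole_arc m n b a"

definition unimodal :: "(nat \<Rightarrow> nat) \<Rightarrow> bool" where
  "unimodal a \<longleftrightarrow> (\<exists>m. (\<forall>i j. i \<le> j \<and> j \<le> m \<longrightarrow> a i \<le> a j) \<and>
                        (\<forall>i j. m \<le> i \<and> i \<le> j \<longrightarrow> a j \<le> a i))"

definition is_mode :: "(nat \<Rightarrow> nat) \<Rightarrow> nat \<Rightarrow> bool" where
  "is_mode a i \<longleftrightarrow> (if i = 0 then 0 < a 0 else a (i - 1) < a i) \<and>
                   (\<forall>j\<ge>i. a (Suc j) \<le> a j)"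

definition mode :: "(nat \<Rightarrow> nat) \<Rightarrow> nat" where
  "mode a = (THE i. is_mode a i)"

end

theory Submission
  imports Defs
begin

(* Deleting the cycle vertex x_1 of T_{4,n} leaves the path x_2 x_3 x_4 y_1 ... y_n, and deleting
   its closed neighbourhood leaves the isolated vertex x_3 next to the path y_1 ... y_n. With the
   path recurrence I(P_{k+1}) = I(P_k) + t I(P_{k-1}) this gives
   I(T_{4,n}) = (1 + t) I(P_{n+2}) + t I(P_n).

   The coefficients of I(P_k) are the binomials C(k + 1 - j, j). Comparing consecutive ones through
   their ratio shows that they rise strictly up to the mode lambda_k and never rise afterwards, and
   that lambda_n <= lambda_{n+2} <= lambda_n + 1. Hence the three summands rise together strictly
   below lambda_{n+2} and fall together from lambda_{n+2} + 1 on, so the mode of the sum is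
   lambda_{n+2} or lambda_{n+2} + 1. The argument only needs n >= 1. *)

text \<open>Coefficient sequence of t times the polynomial with coefficients a.\<close>
definition shift_coeffs :: "(nat \<Rightarrow> nat) \<Rightarrow> nat \<Rightarrow> nat" where
  "shift_coeffs a j = (case j of 0 \<Rightarrow> 0 | Suc i \<Rightarrow> a i)"

lemma shift_coeffs_0 [simp]: "shift_coeffs a 0 = 0"
  and shift_coeffs_Suc [simp]: "shift_coeffs a (Suc i) = a i"
  by (simp_all add: shift_coeffs_def)

lemma shift_coeffs_add: "shift_coeffs (\<lambda>i. a i + b i) j = shift_coeffs a j + shift_coeffs b j"
  by (cases j) simp_all

lemma indep_coeff_0:
  assumes "finite V"
  shows "indep_coeff V E 0 = 1"
proof -
  have "{S. independent_set V E S \<and> card S = 0} = {{}}"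
    using assms by (auto simp: independent_set_def dest: finite_subset)
  then show ?thesis
    by (simp add: indep_coeff_def)
qed

lemma indep_coeff_cong:
  assumes "\<And>u v. u \<in> V \<Longrightarrow> v \<in> V \<Longrightarrow> E u v = E' u v"
  shows "indep_coeff V E = indep_coeff V E'"
proof -
  have "independent_set V E = independent_set V E'"
    using assms unfolding independent_set_def by (blast intro!: ext)
  then show ?thesis
    by (simp add: indep_coeff_def fun_eq_iff)
qed

lemma indep_coeff_image:
  assumes inj: "inj_on f V"
    and edges: "\<And>u v. u \<in> V \<Longrightarrow> v \<in> V \<Longrightarrow> E' (f u) (f v) = E u v"
  shows "indep_coeff (f ` V) E' = indep_coeff V E"
proof
  fix k
  let ?I = "{S. independent_set V E S \<and> card S = k}"
  have "{T. independent_set (f ` V) E' T \<and> card T = k} = image f ` ?I"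
  proof (intro equalityI subsetI)
    fix T
    assume "T \<in> {T. independent_set (f ` V) E' T \<and> card T = k}"
    then have T: "T \<subseteq> f ` V" "\<forall>u\<in>T. \<forall>v\<in>T. \<not> E' u v" "card T = k"
      by (auto simp: independent_set_def)
    define S where "S = {x \<in> V. f x \<in> T}"
    have "S \<subseteq> V" and TS: "T = f ` S"
      using T(1) by (auto simp: S_def)
    moreover have "card S = k"
      using T(3) TS inj \<open>S \<subseteq> V\<close> by (metis card_image inj_on_subset)
    moreover have "\<forall>u\<in>S. \<forall>v\<in>S. \<not> E u v"
      using T(2) edges by (auto simp: S_def)
    ultimately show "T \<in> image f ` ?I"
      by (auto simp: independent_set_def)
  next
    fix T
    assume "T \<in> image f ` ?I"
    then obtain S where S: "S \<subseteq> V" "\<forall>u\<in>S. \<forall>v\<in>S. \<not> E u v" "card S = k" "T = f ` S"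
      by (auto simp: independent_set_def)
    then have "card T = k" "\<forall>u\<in>T. \<forall>v\<in>T. \<not> E' u v"
      using inj edges by (auto simp: card_image inj_on_subset subset_eq)
    then show "T \<in> {T. independent_set (f ` V) E' T \<and> card T = k}"
      using S by (auto simp: independent_set_def)
  qed
  moreover have "inj_on (image f) ?I"
    using inj_on_image_Pow[OF inj] by (rule inj_on_subset) (auto simp: independent_set_def)
  ultimately show "indep_coeff (f ` V) E' k = indep_coeff V E k"
    by (simp add: indep_coeff_def card_image)
qed

lemma indep_coeff_delete_vertex:
  assumes fin: "finite V" and v: "v \<in> V" and "\<not> E v v"
  shows "indep_coeff V E j =
    indep_coeff (V - {v}) E j + shift_coeffs (indep_coeff (V - {v} - {u. E v u \<or> E u v}) E) j"
proof (cases j)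
  case 0
  then show ?thesis
    using fin by (simp add: indep_coeff_0)
next
  case (Suc k)
  let ?A = "{S. independent_set V E S \<and> card S = Suc k}"
  let ?A\<^sub>0 = "{S. independent_set (V - {v}) E S \<and> card S = Suc k}"
  let ?B = "{S. independent_set (V - {v} - {u. E v u \<or> E u v}) E S \<and> card S = k}"
  have "?A = ?A\<^sub>0 \<union> insert v ` ?B"
  proof (intro equalityI subsetI)
    fix S
    assume S: "S \<in> ?A"
    show "S \<in> ?A\<^sub>0 \<union> insert v ` ?B"
    proof (cases "v \<in> S")
      case True
      then have "S = insert v (S - {v})" "S - {v} \<in> ?B"
        using S finite_subset[OF _ fin] by (auto simp: independent_set_def)
      then show ?thesis
        by blast
    qed (use S in \<open>auto simp: independent_set_def\<close>)
  next
    fix S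
    assume "S \<in> ?A\<^sub>0 \<union> insert v ` ?B"
    then show "S \<in> ?A"
    proof
      assume "S \<in> ?A\<^sub>0"
      then show ?thesis
        by (auto simp: independent_set_def)
    next
      assume "S \<in> insert v ` ?B"
      then obtain T where "T \<in> ?B" "S = insert v T"
        by blast
      moreover have "finite T" "v \<notin> T"
        using \<open>T \<in> ?B\<close> finite_subset[OF _ fin] by (auto simp: independent_set_def)
      ultimately show ?thesis
        using v \<open>\<not> E v v\<close> by (auto simp: independent_set_def)
    qed
  qed
  moreover have "finite ?A\<^sub>0" "finite ?B"
    using fin by (auto simp: independent_set_def intro: finite_subset[of _ "Pow V"])
  moreover have "?A\<^sub>0 \<inter> insert v ` ?B = {}" "inj_on (insert v) ?B"
    by (auto simp: independent_set_def inj_on_def)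
  ultimately have "card ?A = card ?A\<^sub>0 + card ?B"
    by (simp add: card_Un_disjoint card_image)
  then show ?thesis
    using Suc by (simp add: indep_coeff_def)
qed

lemma indep_coeff_insert_isolated:
  assumes "finite V" "v \<notin> V" "\<not> E v v" "\<And>u. u \<in> V \<Longrightarrow> \<not> E v u \<and> \<not> E u v"
  shows "indep_coeff (insert v V) E j = indep_coeff V E j + shift_coeffs (indep_coeff V E) j"
proof -
  have "insert v V - {v} = V" "insert v V - {v} - {u. E v u \<or> E u v} = V"
    using assms by auto
  then show ?thesis
    using indep_coeff_delete_vertex[of "insert v V" v E j] assms by simp
qed

abbreviation path_coeff :: "nat \<Rightarrow> nat \<Rightarrow> nat" where
  "path_coeff k \<equiv> indep_coeff (path_V k) (path_E k)"

lemma path_coeff_Suc: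
  "path_coeff (Suc k) j = path_coeff k j + shift_coeffs (path_coeff (k - 1)) j"
proof -
  let ?E = "path_E (Suc k)"
  have "path_V (Suc k) - {k} = path_V k"
    and "path_V (Suc k) - {k} - {u. ?E k u \<or> ?E u k} = path_V (k - 1)"
    by (auto simp: path_V_def path_E_def)
  moreover have "indep_coeff (path_V k) ?E = path_coeff k"
    and "indep_coeff (path_V (k - 1)) ?E = path_coeff (k - 1)"
    by (auto simp: path_V_def path_E_def intro!: indep_coeff_cong)
  ultimately show ?thesis
    using indep_coeff_delete_vertex[of "path_V (Suc k)" k ?E j] by (simp add: path_V_def path_E_def)
qed

lemma path_coeff_eq_binomial: "path_coeff k j = (Suc k - j) choose j"
proof (induction k arbitrary: j rule: less_induct)
  case (less k)
  show ?case
  proof (cases k)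
    case 0
    have "{S. independent_set (path_V 0) (path_E 0) S \<and> card S = j} = (if j = 0 then {{}} else {})"
      by (auto simp: independent_set_def path_V_def)
    then show ?thesis
      using 0 by (simp add: indep_coeff_def)
  next
    case (Suc k')
    show ?thesis
    proof (cases j)
      case (Suc i)
      have "path_coeff k j = (k' - i choose Suc i) + (Suc (k' - 1) - i choose i)"
        using less path_coeff_Suc[of k' j] \<open>k = Suc k'\<close> Suc by simp
      also have "Suc (k' - 1) - i choose i = k' - i choose i"
        by (cases k'; cases i) simp_all
      also have "(k' - i choose Suc i) + (k' - i choose i) = Suc k - j choose j"
        using \<open>k = Suc k'\<close> Suc by (cases "i \<le> k'") (simp_all add: Suc_diff_le)
      finally show ?thesis .
    qed (simp add: indep_coeff_0 path_V_def)
  qed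
qed

lemma binomial_absorption_diff: "Suc j * (b choose Suc j) = (b - j) * (b choose j)"
  using binomial_absorption[of j b] binomial_absorb_comp[of b j] by simp

lemma binomial_diagonal_ratio:
  "Suc j * a * (a - 1 choose Suc j) = (a - j) * (a - j - 1) * (a choose j)"
proof -
  have "Suc j * a * (a - 1 choose Suc j) = a * (Suc j * (a - 1 choose Suc j))"
    by (simp only: ac_simps)
  also have "\<dots> = (a - j - 1) * (a * (a - 1 choose j))"
    by (simp only: binomial_absorption_diff diff_commute ac_simps)
  also have "\<dots> = (a - j - 1) * ((a - j) * (a choose j))"
    by (simp only: binomial_absorb_comp)
  finally show ?thesis
    by (simp only: ac_simps)
qed

lemma path_coeff_Suc_le_iff:
  "path_coeff k (Suc j) \<le> path_coeff k j \<longleftrightarrow> (Suc k - 2*j) * (k - 2*j) \<le> Suc j * (Suc k - j)"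
proof (cases "2*j \<le> k")
  case True
  let ?a = "Suc k - j"
  have "?a - j = Suc k - 2*j" "?a - j - 1 = k - 2*j" "?a - 1 = k - j"
    by simp_all
  then have "Suc j * ?a * path_coeff k (Suc j) = (Suc k - 2*j) * (k - 2*j) * path_coeff k j"
    using binomial_diagonal_ratio[of j ?a] by (simp only: path_coeff_eq_binomial diff_Suc_Suc)
  moreover have "0 < path_coeff k j" "0 < Suc j * ?a"
    using True by (simp_all add: path_coeff_eq_binomial)
  ultimately show ?thesis
    by (metis mult_le_cancel2 mult_le_mono1 nat_mult_le_cancel1 not_le)
next
  case False
  then show ?thesis
    by (simp add: path_coeff_eq_binomial binomial_eq_0)
qed

lemma path_coeff_descent_Suc:
  assumes "path_coeff k (Suc j) \<le> path_coeff k j"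
  shows "path_coeff k (Suc (Suc j)) \<le> path_coeff k (Suc j)"
proof (cases "2 * Suc j \<le> k")
  case True
  then obtain d where k: "k = 2 * Suc j + d"
    using le_Suc_ex by blast
  have "(Suc k - 2 * Suc j) * (k - 2 * Suc j) \<le> (Suc k - 2*j) * (k - 2*j)"
    by (intro mult_le_mono) auto
  also have "\<dots> \<le> Suc j * (Suc k - j)"
    using assms by (simp add: path_coeff_Suc_le_iff)
  also have "\<dots> \<le> Suc (Suc j) * (Suc k - Suc j)"
    unfolding k by (simp add: algebra_simps)
  finally show ?thesis
    by (simp add: path_coeff_Suc_le_iff)
qed (simp add: path_coeff_Suc_le_iff)

lemma path_coeff_descent_add2:
  assumes "path_coeff k (Suc j) \<le> path_coeff k j"
  shows "path_coeff (k + 2) (Suc (Suc j)) \<le> path_coeff (k + 2) (Suc j)"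
proof -
  have "Suc j * (Suc k - j) \<le> Suc (Suc j) * (Suc (k + 2) - Suc j)"
    by (intro mult_le_mono) auto
  then show ?thesis
    using assms by (simp add: path_coeff_Suc_le_iff)
qed

lemma path_coeff_descent_of_add2:
  assumes "path_coeff (k + 2) (Suc j) \<le> path_coeff (k + 2) j"
  shows "path_coeff k (Suc j) \<le> path_coeff k j"
proof (rule ccontr)
  assume "\<not> ?thesis"
  then have gt: "Suc j * (Suc k - j) < (Suc k - 2*j) * (k - 2*j)"
    by (simp add: path_coeff_Suc_le_iff)
  have "2*j < k"
    using gt by (cases "2*j < k") auto
  then obtain d where k: "k = 2*j + 1 + d"
    using less_imp_Suc_add by fastforce
  have gt': "(j + 1) * (j + 2 + d) < (d + 2) * (d + 1)"
    using gt unfolding k by (simp add: algebra_simps)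
  have le': "(d + 4) * (d + 3) \<le> (j + 1) * (j + 4 + d)"
    using assms unfolding k path_coeff_Suc_le_iff by (simp add: algebra_simps)
  show False
  proof (cases "2*d + 4 \<le> j")
    case True
    have "(d + 2) * (d + 1) \<le> (2*d + 5) * (3*d + 6)"
      by (intro mult_le_mono) auto
    also have "\<dots> \<le> (j + 1) * (j + 2 + d)"
      using True by (intro mult_le_mono) auto
    finally show False
      using gt' by simp
  next
    case False
    have "(j + 1) * (j + 4 + d) = (j + 1) * (j + 2 + d) + 2*j + 2"
      and "(d + 4) * (d + 3) = (d + 2) * (d + 1) + 4*d + 10"
      by (simp_all add: algebra_simps)
    then show False
      using gt' le' False by linarith
  qed
qed

definition peak_at :: "(nat \<Rightarrow> nat) \<Rightarrow> nat \<Rightarrow> bool" where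
  "peak_at a m \<longleftrightarrow> 0 < a 0 \<and> (\<forall>j<m. a j < a (Suc j)) \<and> (\<forall>j\<ge>m. a (Suc j) \<le> a j)"

lemma peak_at_Suc_le_iff:
  assumes "peak_at a m"
  shows "a (Suc j) \<le> a j \<longleftrightarrow> m \<le> j"
  using assms leD unfolding peak_at_def by (metis not_le)

lemma peak_at_unimodal:
  assumes "peak_at a m"
  shows "unimodal a"
  unfolding unimodal_def
proof (intro exI conjI allI impI)
  have "a (min j m) \<le> a (min (Suc j) m) \<and> a (max (Suc j) m) \<le> a (max j m)" for j
    using assms by (cases "j < m") (simp_all add: peak_at_def less_imp_le min_absorb2 max_absorb1)
  then have rise: "a (min i m) \<le> a (min j m)" and fall: "a (max j m) \<le> a (max i m)"
    if "i \<le> j" for i j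
    using that by (simp_all add: lift_Suc_mono_le[of "\<lambda>j. a (min j m)"]
        lift_Suc_antimono_le[of "\<lambda>j. a (max j m)"])
  fix i j
  show "a i \<le> a j" if "i \<le> j \<and> j \<le> m"
    using that rise[of i j] by simp
  show "a j \<le> a i" if "m \<le> i \<and> i \<le> j"
    using that fall[of i j] by simp
qed

lemma peak_at_mode:
  assumes "peak_at a m"
  shows "mode a = m"
proof -
  note descent = peak_at_Suc_le_iff[OF assms]
  have is_mode_iff: "is_mode a i \<longleftrightarrow> i = m" for i
  proof
    assume "is_mode a i"
    then have "a (Suc i) \<le> a i" "0 < i \<Longrightarrow> a (i - 1) < a i"
      by (auto simp: is_mode_def)
    then show "i = m"
      using descent[of i] descent[of "i - 1"] by (cases i) auto
  next
    assume "i = m"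
    then show "is_mode a i"
      using assms descent by (cases i) (auto simp: is_mode_def peak_at_def)
  qed
  show ?thesis
    unfolding mode_def by (rule the_equality) (simp_all add: is_mode_iff)
qed

lemma ex_peak_at:
  assumes "0 < a 0" and "a (Suc j\<^sub>0) \<le> a j\<^sub>0"
    and descent_Suc: "\<And>j. a (Suc j) \<le> a j \<Longrightarrow> a (Suc (Suc j)) \<le> a (Suc j)"
  shows "\<exists>m. peak_at a m"
proof -
  define m where "m = (LEAST j. a (Suc j) \<le> a j)"
  have "a (Suc j) \<le> a j" if "m \<le> j" for j
    using that
  proof (induction rule: dec_induct)
    case base
    show ?case
      unfolding m_def using assms(2) by (rule LeastI)
  qed (rule descent_Suc)
  moreover have "a j < a (Suc j)" if "j < m" for j
    using not_less_Least[OF that[unfolded m_def]] by simp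
  ultimately have "peak_at a m"
    using assms(1) by (simp add: peak_at_def)
  then show ?thesis
    by blast
qed

lemma peak_at_path_coeff: "peak_at (path_coeff k) (mode (path_coeff k))"
proof -
  have "0 < path_coeff k 0" "path_coeff k (Suc k) \<le> path_coeff k k"
    by (simp_all add: path_coeff_eq_binomial)
  then have "\<exists>m. peak_at (path_coeff k) m"
    using path_coeff_descent_Suc by (rule ex_peak_at)
  then show ?thesis
    using peak_at_mode by blast
qed

lemma mode_path_coeff_le_add2: "mode (path_coeff k) \<le> mode (path_coeff (k + 2))"
proof -
  let ?m = "mode (path_coeff (k + 2))"
  have "path_coeff (k + 2) (Suc ?m) \<le> path_coeff (k + 2) ?m"
    using peak_at_Suc_le_iff[OF peak_at_path_coeff] by blast
  then have "path_coeff k (Suc ?m) \<le> path_coeff k ?m"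
    by (rule path_coeff_descent_of_add2)
  then show ?thesis
    using peak_at_Suc_le_iff[OF peak_at_path_coeff] by blast
qed

lemma mode_path_coeff_add2_le: "mode (path_coeff (k + 2)) \<le> Suc (mode (path_coeff k))"
proof -
  let ?m = "mode (path_coeff k)"
  have "path_coeff k (Suc ?m) \<le> path_coeff k ?m"
    using peak_at_Suc_le_iff[OF peak_at_path_coeff] by blast
  then have "path_coeff (k + 2) (Suc (Suc ?m)) \<le> path_coeff (k + 2) (Suc ?m)"
    by (rule path_coeff_descent_add2)
  then show ?thesis
    using peak_at_Suc_le_iff[OF peak_at_path_coeff] by blast
qed

lemma peak_at_add_shift_coeffs:
  assumes p: "peak_at p l" and q: "peak_at q u" and "u \<le> l" "l \<le> Suc u"
  defines "c \<equiv> \<lambda>j. p j + shift_coeffs p j + shift_coeffs q j"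
  shows "peak_at c l \<or> peak_at c (Suc l)"
proof -
  have p_rise: "\<And>j. j < l \<Longrightarrow> p j < p (Suc j)"
    and p_fall: "\<And>j. l \<le> j \<Longrightarrow> p (Suc j) \<le> p j"
    using p by (simp_all add: peak_at_def)
  have q_rise: "\<And>j. j < u \<Longrightarrow> q j < q (Suc j)"
    and q_fall: "\<And>j. u \<le> j \<Longrightarrow> q (Suc j) \<le> q j"
    using q by (simp_all add: peak_at_def)
  have c_rise: "c j < c (Suc j)" if "j < l" for j
  proof -
    have "shift_coeffs p j \<le> p j \<and> shift_coeffs q j \<le> q j"
      using that \<open>l \<le> Suc u\<close> p_rise q_rise by (cases j) (auto intro: less_imp_le)
    then show ?thesis
      using p_rise[OF that] by (simp add: c_def)
  qed
  have c_fall: "c (Suc j) \<le> c j" if after_peak: "Suc l \<le> j" for j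
  proof -
    obtain i where j: "j = Suc i" and "l \<le> i"
      using after_peak by (cases j) auto
    have "p (Suc j) \<le> p j" "p (Suc i) \<le> p i" "q (Suc i) \<le> q i"
      using \<open>l \<le> i\<close> \<open>u \<le> l\<close> j p_fall q_fall by simp_all
    then show ?thesis
      unfolding c_def j by simp
  qed
  have "0 < c 0"
    using p by (simp add: peak_at_def c_def)
  show ?thesis
  proof (cases "c (Suc l) \<le> c l")
    case True
    then have "c (Suc j) \<le> c j" if "l \<le> j" for j
      using c_fall that by (cases "j = l") auto
    then show ?thesis
      using \<open>0 < c 0\<close> c_rise by (simp add: peak_at_def)
  next
    case False
    then have "c j < c (Suc j)" if "j < Suc l" for j
      using c_rise that by (cases "j = l") auto
    then show ?thesis
      using \<open>0 < c 0\<close> c_fall by (simp add: peak_at_def)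
  qed
qed

lemma tadpole_tail_coeff: "indep_coeff (Inr ` {1..n}) (tadpole_E m n) = path_coeff n"
proof -
  have "indep_coeff (Inr ` {1..n}) (tadpole_E m n) =
      indep_coeff ((\<lambda>k. Inr (Suc k)) ` path_V n) (tadpole_E m n)"
    by (simp add: path_V_def image_Suc_lessThan flip: image_image)
  also have "\<dots> = path_coeff n"
    by (rule indep_coeff_image)
      (auto simp: inj_on_def path_V_def path_E_def tadpole_E_def tadpole_arc_def)
  finally show ?thesis .
qed

lemma tadpole_delete_first_coeff:
  assumes "3 \<le> m"
  shows "indep_coeff (tadpole_V m n - {Inl 1}) (tadpole_E m n) = path_coeff (m + n - 1)"
proof -
  define f :: "nat \<Rightarrow> nat + nat"
    where "f k = (if k < m - 1 then Inl (k + 2) else Inr (k + 2 - m))" for k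
  have "tadpole_V m n - {Inl 1} = f ` path_V (m + n - 1)"
  proof (intro equalityI subsetI)
    fix x
    assume "x \<in> tadpole_V m n - {Inl 1}"
    then consider i where "x = Inl i" "2 \<le> i" "i \<le> m" | i where "x = Inr i" "1 \<le> i" "i \<le> n"
      by (fastforce simp: tadpole_V_def)
    then show "x \<in> f ` path_V (m + n - 1)"
    proof cases
      case 1
      then show ?thesis
        by (intro image_eqI[of _ _ "i - 2"]) (auto simp: f_def path_V_def)
    next
      case 2
      then show ?thesis
        using assms by (intro image_eqI[of _ _ "i + m - 2"]) (auto simp: f_def path_V_def)
    qed
  qed (use assms in \<open>auto simp: f_def path_V_def tadpole_V_def intro!: imageI\<close>)
  also have "indep_coeff \<dots> (tadpole_E m n) = path_coeff (m + n - 1)"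
    by (rule indep_coeff_image)
      (use assms in \<open>auto simp: f_def inj_on_def path_V_def path_E_def tadpole_E_def tadpole_arc_def\<close>)
  finally show ?thesis .
qed

lemma tadpole4_coeff:
  assumes "1 \<le> n"
  shows "indep_coeff (tadpole_V 4 n) (tadpole_E 4 n) j =
    path_coeff (n + 2) j + shift_coeffs (path_coeff (n + 2)) j + shift_coeffs (path_coeff n) j"
proof -
  let ?V = "tadpole_V 4 n" and ?E = "tadpole_E 4 n"
  let ?N = "?V - {Inl 1} - {u. ?E (Inl 1) u \<or> ?E u (Inl 1)}"
  let ?Y = "Inr ` {1..n} :: (nat + nat) set"
  have "indep_coeff (insert (Inl 3) ?Y) ?E i = path_coeff n i + shift_coeffs (path_coeff n) i" for i
    unfolding tadpole_tail_coeff[of n 4, symmetric]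
    by (rule indep_coeff_insert_isolated) (auto simp: tadpole_E_def tadpole_arc_def)
  moreover have "?N = insert (Inl 3) ?Y"
    using assms by (auto simp: tadpole_V_def tadpole_E_def tadpole_arc_def)
  ultimately have minus_nbhd_x1:
      "indep_coeff ?N ?E = (\<lambda>i. path_coeff n i + shift_coeffs (path_coeff n) i)"
    by (simp add: fun_eq_iff)
  have minus_x1: "indep_coeff (?V - {Inl 1}) ?E = path_coeff (n + 3)"
    using tadpole_delete_first_coeff[of 4 n] by (simp add: add.commute)
  have "indep_coeff ?V ?E j =
      indep_coeff (?V - {Inl 1}) ?E j + shift_coeffs (indep_coeff ?N ?E) j"
    by (rule indep_coeff_delete_vertex) (auto simp: tadpole_V_def tadpole_E_def tadpole_arc_def)
  also have "\<dots> = path_coeff (n + 3) j +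
      shift_coeffs (\<lambda>i. path_coeff n i + shift_coeffs (path_coeff n) i) j"
    by (simp only: minus_x1 minus_nbhd_x1)
  also have "\<dots> =
      path_coeff (n + 2) j + shift_coeffs (path_coeff (n + 2)) j + shift_coeffs (path_coeff n) j"
    using path_coeff_Suc[of "n + 2"] path_coeff_Suc[of "n + 1"]
    by (cases j) (simp_all add: shift_coeffs_add numeral_eq_Suc)
  finally show ?thesis .
qed

theorem proposition3p4:
  fixes n :: nat
  assumes "n \<ge> 5"
  shows "unimodal (indep_coeff (tadpole_V 4 n) (tadpole_E 4 n)) \<and>
         mode (indep_coeff (tadpole_V 4 n) (tadpole_E 4 n)) \<in>
           {mode (indep_coeff (path_V (n + 2)) (path_E (n + 2))),
            mode (indep_coeff (path_V (n + 2)) (path_E (n + 2))) + 1}"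
proof -
  let ?T = "indep_coeff (tadpole_V 4 n) (tadpole_E 4 n)"
  let ?l = "mode (path_coeff (n + 2))"
  have "?T = (\<lambda>j. path_coeff (n + 2) j + shift_coeffs (path_coeff (n + 2)) j +
      shift_coeffs (path_coeff n) j)"
    using assms by (simp add: fun_eq_iff tadpole4_coeff)
  moreover have "peak_at \<dots> ?l \<or> peak_at \<dots> (Suc ?l)"
    by (rule peak_at_add_shift_coeffs[OF peak_at_path_coeff peak_at_path_coeff
          mode_path_coeff_le_add2 mode_path_coeff_add2_le])
  ultimately have "peak_at ?T ?l \<or> peak_at ?T (Suc ?l)"
    by simp
  then show ?thesis
    using peak_at_unimodal peak_at_mode by auto
qed

end
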